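(* Let $G$, $H$, the supervisors with $\Sigma_{o,i},\Sigma_{c,i},N_{o,i}$, a controllable event $\sigma\in\Sigma_c$, $N=\max\{N_{o,i}:i\in I^c(\sigma)\}$, and the verifiers $V^k_\sigma$ ($k=0,\dots,N$) with reachable state sets $X^k_\sigma$ be as in the context. Then $\mathcal{L}(H)$ is delay coobservable w.r.t. $N_{o,1},\dots,N_{o,n}$, $\sigma$, and $\mathcal{L}(G)$ if and only if for every $k\in\{0,1,\dots,N\}$ there is no state $(q,(q_i)_{i\in I^c(\sigma)},k)\in X^k_\sigma$ with $\sigma\in\Gamma(q)\setminus\Gamma_H(q)$ and $\sigma\in\Gamma^{aug}_{H,N_{o,i}}(q_i)$ for all $i\in I^c(\sigma)$.
   Context: $G=(Q,\Sigma,\delta,\Gamma,q_0,Q_m)$ is a deterministic finite automaton (transition function extended to strings; $\Gamma(q)$ = set of events defined at $q$; $\mathcal{L}(G)$ its generated language). $H=(Q_H,\Sigma,\delta_H,\Gamma_H,q_0,Q_{m,H})$ is a sub-automaton of $G$. For a string $s$, $|s|$ is its length, $s_{-m}$ its prefix of length $\max\{0,|s|-m\}$, $\Sigma^{\le M}$ the strings of length at most $M$. Supervisors $I=\{1,\dots,n\}$: supervisor $i$ has observable events $\Sigma_{o,i}$, $\Sigma_{uo,i}=\Sigma\setminus\Sigma_{o,i}$, controllable events $\Sigma_{c,i}$, delay bound $N_{o,i}\in\mathbb{N}$; $\Sigma_c=\bigcup_i\Sigma_{c,i}$, $I^c(\sigma)=\{i:\sigma\in\Sigma_{c,i}\}$.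 $P_i$ is natural projection onto $\Sigma_{o,i}^*$; $\Theta_i^{N_{o,i}}(s)=\{P_i(s_{-m}):0\le m\le N_{o,i}\}$ for $s\in\mathcal{L}(G)$; $(\Theta_i^{N_{o,i}})^{-1}(t)=\{u\in\mathcal{L}(G):t\in\Theta_i^{N_{o,i}}(u)\}$, extended to sets elementwise. $\mathcal{L}(H)$ is delay coobservable w.r.t. $N_{o,1},\dots,N_{o,n}$, $\sigma$, and $\mathcal{L}(G)$ if for every $s\in\mathcal{L}(H)$ with $s\sigma\in\mathcal{L}(G)\setminus\mathcal{L}(H)$ there is $i\in I^c(\sigma)$ with $(\Theta_i^{N_{o,i}})^{-1}(\Theta_i^{N_{o,i}}(s))\sigma\cap\mathcal{L}(H)=\emptyset$. Augmented automaton $H^{aug}_N$: states $Q_H\cup\{q_{dis}\}$; for $q\in Q_H$, $e\in\Sigma$: $\delta^{aug}(q,e)=\delta_H(q,e)$ if $e\in\Gamma_H(q)$, $=q_{dis}$ if $e\notin\Gamma_H(q)$ and $e\in\Gamma_H(\delta_H(q,s'))$ for some $s'\in\Sigma^{\le N}$ with $\delta_H(q,s')$ defined, undefined otherwise; $\Gamma^{aug}_{H,N}(q)$ is the set of events defined at $q$ in $H^{aug}_N$. For $k\in\{0,\dots,N\}$ the verifier $V^k_\sigma$ has states $(q,(q_i)_{i\in I^c(\sigma)},d)$ with $q,q_i\in Q_H$, $d\in[0,k]$. Initial states: for $k<N$, the single state $(q_0,(q_0)_i,0)$; for $k=N$, all $(q,(q_i)_i,0)$ such that there exist $t\in\mathcal{L}(H)$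 with $q=\delta_H(q_0,t)$ and, for each $i\in I^c(\sigma)$, $s_i\in\mathcal{L}(H)$ with $q_i=\delta_H(q_0,s_i)$ and $P_i(s_i)=P_i(t)$. At a state $(q,(q_i)_i,d)$ and for $e\in\Sigma$, each $i\in I^c(\sigma)$ falls in one case: C1: $k-d>N_{o,i}$, $e\in\Sigma_{o,i}$; C2: $k-d>N_{o,i}$, $e\in\Sigma_{uo,i}$; C3: $k-d\le N_{o,i}$, $\sigma\notin\Gamma^{aug}_{H,N_{o,i}}(q_i)$, $e\in\Sigma_{o,i}$; C4: $k-d\le N_{o,i}$, $\sigma\notin\Gamma^{aug}_{H,N_{o,i}}(q_i)$, $e\in\Sigma_{uo,i}$; C5: $k-d\le N_{o,i}$, $\sigma\in\Gamma^{aug}_{H,N_{o,i}}(q_i)$. Type-1 transition: if $d+1\le k$, $\delta_H(q,e)$ is defined, and $\delta_H(q_i,e)$ is defined for every $i$ in C1 or C3, there is a transition to $(\delta_H(q,e),(q_i')_i,d+1)$ with $q_i'=\delta_H(q_i,e)$ for $i$ in C1 or C3 and $q_i'=q_i$ otherwise. Type-2 transition: for each $i$ in C2 or C4 with $\delta_H(q_i,e)$ defined, there is a transition to the state obtained by replacing $q_i$ by $\delta_H(q_i,e)$, all other components unchanged. $X^k_\sigma$ is the set of states of $V^k_\sigma$ reachable from its initial state(s). *)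

theory Defs
  imports Main
begin

text \<open>Marked states play no role in the statement and are omitted.\<close>

fun dstar :: "('q \<Rightarrow> 'e \<Rightarrow> 'q option) \<Rightarrow> 'q \<Rightarrow> 'e list \<Rightarrow> 'q option" where
  "dstar \<delta> q [] = Some q"
| "dstar \<delta> q (e # s) = (case \<delta> q e of None \<Rightarrow> None | Some q' \<Rightarrow> dstar \<delta> q' s)"

definition Gam :: "('q \<Rightarrow> 'e \<Rightarrow> 'q option) \<Rightarrow> 'q \<Rightarrow> 'e set" where
  "Gam \<delta> q = {e. \<delta> q e \<noteq> None}"

definition lang :: "('q \<Rightarrow> 'e \<Rightarrow> 'q option) \<Rightarrow> 'q \<Rightarrow> 'e list set" where
  "lang \<delta> q0 = {s. dstar \<delta> q0 s \<noteq> None}"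

definition is_DFA :: "'e set \<Rightarrow> 'q set \<Rightarrow> ('q \<Rightarrow> 'e \<Rightarrow> 'q option) \<Rightarrow> 'q \<Rightarrow> bool" where
  "is_DFA Sig Q \<delta> q0 \<longleftrightarrow> finite Sig \<and> finite Q \<and> q0 \<in> Q \<and>
     (\<forall>q e q'. \<delta> q e = Some q' \<longrightarrow> q \<in> Q \<and> e \<in> Sig \<and> q' \<in> Q)"

definition is_subaut ::
  "'e set \<Rightarrow> 'q set \<Rightarrow> ('q \<Rightarrow> 'e \<Rightarrow> 'q option) \<Rightarrow> 'q set \<Rightarrow> ('q \<Rightarrow> 'e \<Rightarrow> 'q option) \<Rightarrow> 'q \<Rightarrow> bool" where
  "is_subaut Sig Q \<delta> QH \<delta>H q0 \<longleftrightarrow> is_DFA Sig QH \<delta>H q0 \<and> QH \<subseteq> Q \<and>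
     (\<forall>q e q'. \<delta>H q e = Some q' \<longrightarrow> \<delta> q e = Some q')"

definition proj :: "'e set \<Rightarrow> 'e list \<Rightarrow> 'e list" where
  "proj So s = filter (\<lambda>e. e \<in> So) s"

text \<open>s_{-m}: prefix of length max 0 (|s| - m)\<close>
definition trunc :: "'e list \<Rightarrow> nat \<Rightarrow> 'e list" where
  "trunc s m = take (length s - m) s"

definition Theta :: "'e set \<Rightarrow> nat \<Rightarrow> 'e list \<Rightarrow> 'e list set" where
  "Theta So No s = {proj So (trunc s m) | m. m \<le> No}"

definition Theta_inv :: "'e list set \<Rightarrow> 'e set \<Rightarrow> nat \<Rightarrow> 'e list \<Rightarrow> 'e list set" where
  "Theta_inv LG So No t = {u \<in> LG. t \<in> Theta So No u}"

definition Theta_inv_set :: "'e list set \<Rightarrow> 'e set \<Rightarrow> nat \<Rightarrow> 'e list set \<Rightarrow> 'e list set" where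
  "Theta_inv_set LG So No T = (\<Union>t\<in>T. Theta_inv LG So No t)"

definition Ic :: "nat \<Rightarrow> (nat \<Rightarrow> 'e set) \<Rightarrow> 'e \<Rightarrow> nat set" where
  "Ic n Sc \<sigma> = {i \<in> {1..n}. \<sigma> \<in> Sc i}"

definition delay_coobservable ::
  "'e list set \<Rightarrow> 'e list set \<Rightarrow> nat \<Rightarrow> (nat \<Rightarrow> 'e set) \<Rightarrow> (nat \<Rightarrow> 'e set) \<Rightarrow> (nat \<Rightarrow> nat) \<Rightarrow> 'e \<Rightarrow> bool" where
  "delay_coobservable LH LG n So Sc No \<sigma> \<longleftrightarrow>
     (\<forall>s \<in> LH. s @ [\<sigma>] \<in> LG - LH \<longrightarrow>
        (\<exists>i \<in> Ic n Sc \<sigma>.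
           {u @ [\<sigma>] | u. u \<in> Theta_inv_set LG (So i) (No i) (Theta (So i) (No i) s)} \<inter> LH = {}))"

datatype 'q aug_state = Reg 'q | Dis

definition delta_aug ::
  "'e set \<Rightarrow> ('q \<Rightarrow> 'e \<Rightarrow> 'q option) \<Rightarrow> nat \<Rightarrow> 'q \<Rightarrow> 'e \<Rightarrow> 'q aug_state option" where
  "delta_aug Sig \<delta>H N q e =
     (if e \<in> Gam \<delta>H q then map_option Reg (\<delta>H q e)
      else if (\<exists>s' q'. s' \<in> lists Sig \<and> length s' \<le> N \<and> dstar \<delta>H q s' = Some q' \<and> e \<in> Gam \<delta>H q')
      then Some Dis else None)"

definition Gam_aug :: "'e set \<Rightarrow> ('q \<Rightarrow> 'e \<Rightarrow> 'q option) \<Rightarrow> nat \<Rightarrow> 'q \<Rightarrow> 'e set" where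
  "Gam_aug Sig \<delta>H N q = {e. delta_aug Sig \<delta>H N q e \<noteq> None}"

text \<open>Verifier states: (q, qs, d); the tuple (q_i) for i in Ic(sigma) is represented by a
function qs :: nat => 'q, whose values outside Ic(sigma) are kept at q0.\<close>

type_synonym 'q vstate = "'q \<times> (nat \<Rightarrow> 'q) \<times> nat"

definition ver_init ::
  "'e set \<Rightarrow> ('q \<Rightarrow> 'e \<Rightarrow> 'q option) \<Rightarrow> 'q \<Rightarrow> nat \<Rightarrow> (nat \<Rightarrow> 'e set) \<Rightarrow> (nat \<Rightarrow> 'e set) \<Rightarrow> 'e
    \<Rightarrow> nat \<Rightarrow> nat \<Rightarrow> 'q vstate set" where
  "ver_init Sig \<delta>H q0 n So Sc \<sigma> N k =
     (if k < N then {(q0, \<lambda>_. q0, 0)}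
      else {(q, qs, 0) | q qs. \<exists>t \<in> lang \<delta>H q0. dstar \<delta>H q0 t = Some q \<and>
              (\<forall>i \<in> Ic n Sc \<sigma>. \<exists>si \<in> lang \<delta>H q0. dstar \<delta>H q0 si = Some (qs i) \<and>
                   proj (So i) si = proj (So i) t) \<and>
              (\<forall>i. i \<notin> Ic n Sc \<sigma> \<longrightarrow> qs i = q0)})"

text \<open>Supervisor i "moves with" event e (cases C1 or C3) resp. "moves alone" (C2 or C4).\<close>
definition case13 ::
  "'e set \<Rightarrow> ('q \<Rightarrow> 'e \<Rightarrow> 'q option) \<Rightarrow> (nat \<Rightarrow> 'e set) \<Rightarrow> (nat \<Rightarrow> nat) \<Rightarrow> 'e \<Rightarrow> nat
     \<Rightarrow> 'q vstate \<Rightarrow> 'e \<Rightarrow> nat \<Rightarrow> bool" where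
  "case13 Sig \<delta>H So No \<sigma> k x e i = (case x of (q, qs, d) \<Rightarrow>
     (k - d > No i \<and> e \<in> So i) \<or>
     (k - d \<le> No i \<and> \<sigma> \<notin> Gam_aug Sig \<delta>H (No i) (qs i) \<and> e \<in> So i))"

definition case24 ::
  "'e set \<Rightarrow> ('q \<Rightarrow> 'e \<Rightarrow> 'q option) \<Rightarrow> (nat \<Rightarrow> 'e set) \<Rightarrow> (nat \<Rightarrow> nat) \<Rightarrow> 'e \<Rightarrow> nat
     \<Rightarrow> 'q vstate \<Rightarrow> 'e \<Rightarrow> nat \<Rightarrow> bool" where
  "case24 Sig \<delta>H So No \<sigma> k x e i = (case x of (q, qs, d) \<Rightarrow>
     (k - d > No i \<and> e \<in> Sig - So i) \<or>
     (k - d \<le> No i \<and> \<sigma> \<notin> Gam_aug Sig \<delta>H (No i) (qs i) \<and> e \<in> Sig - So i))"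

definition ver_step ::
  "'e set \<Rightarrow> ('q \<Rightarrow> 'e \<Rightarrow> 'q option) \<Rightarrow> nat \<Rightarrow> (nat \<Rightarrow> 'e set) \<Rightarrow> (nat \<Rightarrow> 'e set) \<Rightarrow> (nat \<Rightarrow> nat)
     \<Rightarrow> 'e \<Rightarrow> nat \<Rightarrow> ('q vstate \<times> 'q vstate) set" where
  "ver_step Sig \<delta>H n So Sc No \<sigma> k =
     {((q, qs, d), (q', qs', d + 1)) | q qs d q' qs' e.
        e \<in> Sig \<and> d + 1 \<le> k \<and> \<delta>H q e = Some q' \<and>
        (\<forall>i \<in> Ic n Sc \<sigma>. case13 Sig \<delta>H So No \<sigma> k (q, qs, d) e i \<longrightarrow> \<delta>H (qs i) e \<noteq> None) \<and>
        qs' = (\<lambda>i. if i \<in> Ic n Sc \<sigma> \<and> case13 Sig \<delta>H So No \<sigma> k (q, qs, d) e i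
                   then the (\<delta>H (qs i) e) else qs i)}
   \<union> {((q, qs, d), (q, qs(i := p), d)) | q qs d e i p.
        e \<in> Sig \<and> i \<in> Ic n Sc \<sigma> \<and> case24 Sig \<delta>H So No \<sigma> k (q, qs, d) e i \<and> \<delta>H (qs i) e = Some p}"

definition ver_reach ::
  "'e set \<Rightarrow> ('q \<Rightarrow> 'e \<Rightarrow> 'q option) \<Rightarrow> 'q \<Rightarrow> nat \<Rightarrow> (nat \<Rightarrow> 'e set) \<Rightarrow> (nat \<Rightarrow> 'e set) \<Rightarrow> (nat \<Rightarrow> nat)
     \<Rightarrow> 'e \<Rightarrow> nat \<Rightarrow> nat \<Rightarrow> 'q vstate set" where
  "ver_reach Sig \<delta>H q0 n So Sc No \<sigma> N k =
     (ver_step Sig \<delta>H n So Sc No \<sigma> k)\<^sup>* `` ver_init Sig \<delta>H q0 n So Sc \<sigma> N k"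

end

theory Submission
  imports Defs
begin

(*
  Soundness: every reachable state (q, (q_i), d) of the verifier is realized by a string t of L(H)
  leading to q, each q_i being reached by a string that supervisor i cannot tell apart from t or,
  once component i has frozen (case C5), from t with at most N_{o,i} - (k - d) final events removed.
  At a bad state of depth k each q_i also enables sigma within N_{o,i} steps, so t witnesses a
  violation of delay coobservability.

  Completeness: given a violating s and confusing strings u_i, run the verifier with
  k = min (|s|, N) so that its first component reads the last k events of s. Component i follows
  a prefix of the truncated u_i whose observation matches that of the prefix of s read so far: it
  runs ahead through unobservable events on its own, moves jointly on observable ones (they occur
  in the same order in both strings), and freezes once its string is used up.
*)

lemma dstar_append: "dstar \<delta> q (s @ t) = Option.bind (dstar \<delta> q s) (\<lambda>p. dstar \<delta> p t)"
  by (induction s arbitrary: q) (auto split: option.split)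

lemma dstar_snoc: "dstar \<delta> q (s @ [e]) = Option.bind (dstar \<delta> q s) (\<lambda>p. \<delta> p e)"
  by (induction s arbitrary: q) (auto split: option.split)

lemma dstar_append_Some_iff:
  "dstar \<delta> q (s @ t) = Some p \<longleftrightarrow> (\<exists>p'. dstar \<delta> q s = Some p' \<and> dstar \<delta> p' t = Some p)"
  by (simp add: dstar_append bind_eq_Some_conv)

lemma dstar_prefix_not_None: "dstar \<delta> q (s @ t) \<noteq> None \<Longrightarrow> dstar \<delta> q s \<noteq> None"
  by (auto simp: dstar_append split: Option.bind_splits)

lemma snoc_in_lang_iff: "s @ [e] \<in> lang \<delta> q0 \<longleftrightarrow> (\<exists>p. dstar \<delta> q0 s = Some p \<and> e \<in> Gam \<delta> p)"
  by (auto simp: lang_def Gam_def dstar_snoc split: Option.bind_splits)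

lemma dstar_sub:
  assumes "\<forall>q e p. \<delta>H q e = Some p \<longrightarrow> \<delta> q e = Some p"
  shows "dstar \<delta>H q s = Some p \<Longrightarrow> dstar \<delta> q s = Some p"
  using assms by (induction s arbitrary: q) (auto split: option.splits)

lemma Gam_aug_iff:
  "\<sigma> \<in> Gam_aug Sig \<delta> M q \<longleftrightarrow>
     (\<exists>s p. s \<in> lists Sig \<and> length s \<le> M \<and> dstar \<delta> q s = Some p \<and> \<sigma> \<in> Gam \<delta> p)"
proof
  assume "\<sigma> \<in> Gam_aug Sig \<delta> M q"
  then have defined: "delta_aug Sig \<delta> M q \<sigma> \<noteq> None"
    by (simp add: Gam_aug_def)
  show "\<exists>s p. s \<in> lists Sig \<and> length s \<le> M \<and> dstar \<delta> q s = Some p \<and> \<sigma> \<in> Gam \<delta> p"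
  proof (cases "\<sigma> \<in> Gam \<delta> q")
    case True
    then show ?thesis by (intro exI[of _ "[]"] exI[of _ q]) simp
  next
    case False
    with defined show ?thesis
      unfolding delta_aug_def by (auto split: if_splits)
  qed
next
  assume ex: "\<exists>s p. s \<in> lists Sig \<and> length s \<le> M \<and> dstar \<delta> q s = Some p \<and> \<sigma> \<in> Gam \<delta> p"
  show "\<sigma> \<in> Gam_aug Sig \<delta> M q"
  proof (cases "\<sigma> \<in> Gam \<delta> q")
    case True
    then show ?thesis by (auto simp: Gam_aug_def delta_aug_def Gam_def)
  next
    case False
    have "delta_aug Sig \<delta> M q \<sigma> = Some Dis"
      unfolding delta_aug_def by (rule trans[OF if_not_P[OF False] if_P[OF ex]])
    then show ?thesis by (simp add: Gam_aug_def)
  qed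
qed

lemma proj_Nil [simp]: "proj A [] = []"
  by (simp add: proj_def)

lemma proj_Cons: "proj A (e # s) = (if e \<in> A then e # proj A s else proj A s)"
  by (simp add: proj_def)

lemma proj_append [simp]: "proj A (s @ t) = proj A s @ proj A t"
  by (simp add: proj_def)

lemma proj_single [simp]: "proj A [e] = (if e \<in> A then [e] else [])"
  by (simp add: proj_def)

lemma proj_eq_Nil_iff: "proj A s = [] \<longleftrightarrow> set s \<inter> A = {}"
  by (auto simp: proj_def filter_empty_conv)

lemma proj_eq_append_split:
  "proj A s = p @ r \<Longrightarrow> \<exists>x y. s = x @ y \<and> proj A x = p \<and> proj A y = r"
proof (induction s arbitrary: p)
  case (Cons e s)
  consider "p = []" | "p \<noteq> []" "e \<in> A" | "e \<notin> A"
    by blast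
  then show ?case
  proof cases
    case 1
    with Cons.prems have "e # s = [] @ e # s" "proj A [] = p" "proj A (e # s) = r"
      by simp_all
    then show ?thesis by blast
  next
    case 2
    with Cons.prems obtain p' where p: "p = e # p'" and "proj A s = p' @ r"
      by (cases p) (auto simp: proj_Cons)
    with Cons.IH obtain x y where "s = x @ y" "proj A x = p'" "proj A y = r"
      by blast
    with p 2 have "e # s = (e # x) @ y" "proj A (e # x) = p" "proj A y = r"
      by (simp_all add: proj_Cons)
    then show ?thesis by blast
  next
    case 3
    with Cons.prems have "proj A s = p @ r"
      by (simp add: proj_Cons)
    with Cons.IH obtain x y where "s = x @ y" "proj A x = p" "proj A y = r"
      by blast
    with 3 have "e # s = (e # x) @ y" "proj A (e # x) = p" "proj A y = r"
      by (simp_all add: proj_Cons)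
    then show ?thesis by blast
  qed
qed simp

lemma proj_next_observable:
  assumes "proj A (x @ y) = proj A (s @ e # t)" "proj A x = proj A s" "e \<in> A"
    and "y = [] \<or> hd y \<in> A"
  shows "\<exists>y'. y = e # y'"
  using assms by (cases y) (auto simp: proj_Cons)

lemma trunc_append_length [simp]: "trunc (s @ t) (length t) = s"
  by (simp add: trunc_def)

lemma trunc_snoc_Suc [simp]: "trunc (s @ [e]) (Suc m) = trunc s m"
  by (simp add: trunc_def)

lemma trunc_0 [simp]: "trunc s 0 = s"
  by (simp add: trunc_def)

lemma Theta_iff: "t \<in> Theta A M s \<longleftrightarrow> (\<exists>m \<le> M. t = proj A (trunc s m))"
  by (auto simp: Theta_def)

lemma delay_coobservable_iff:
  "delay_coobservable LH LG n So Sc No \<sigma> \<longleftrightarrow>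
     (\<forall>s \<in> LH. s @ [\<sigma>] \<in> LG - LH \<longrightarrow>
        (\<exists>i \<in> Ic n Sc \<sigma>. \<forall>u \<in> LG. u @ [\<sigma>] \<in> LH \<longrightarrow>
           Theta (So i) (No i) u \<inter> Theta (So i) (No i) s = {}))"
proof -
  have "{u @ [\<sigma>] | u. u \<in> Theta_inv_set LG (So i) (No i) (Theta (So i) (No i) s)} \<inter> LH = {} \<longleftrightarrow>
      (\<forall>u \<in> LG. u @ [\<sigma>] \<in> LH \<longrightarrow> Theta (So i) (No i) u \<inter> Theta (So i) (No i) s = {})" for i s
    by (auto simp: Theta_inv_set_def Theta_inv_def)
  then show ?thesis
    unfolding delay_coobservable_def by simp
qed

lemma take_eq_take_nth_drop:
  "a < b \<Longrightarrow> b \<le> length s \<Longrightarrow> take b s = take a s @ s ! a # drop (Suc a) (take b s)"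
  using id_take_nth_drop[of a "take b s"] by (simp add: min_def)

locale verifier =
  fixes Sig :: "'e set" and \<delta>H :: "'q \<Rightarrow> 'e \<Rightarrow> 'q option" and q0 :: 'q and n :: nat
    and So Sc :: "nat \<Rightarrow> 'e set" and No :: "nat \<Rightarrow> nat" and \<sigma> :: 'e and N k :: nat
  assumes events_in_Sig: "\<delta>H q e = Some p \<Longrightarrow> e \<in> Sig"
begin

abbreviation I :: "nat set" where
  "I \<equiv> Ic n Sc \<sigma>"

abbreviation step :: "('q vstate \<times> 'q vstate) set" where
  "step \<equiv> ver_step Sig \<delta>H n So Sc No \<sigma> k"

abbreviation reach :: "'q vstate set" where
  "reach \<equiv> ver_reach Sig \<delta>H q0 n So Sc No \<sigma> N k"

lemma run_in_lists: "dstar \<delta>H q s = Some p \<Longrightarrow> s \<in> lists Sig"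
  by (induction s arbitrary: q) (auto intro: events_in_Sig split: option.splits)

lemma finite_I: "finite I"
  by (simp add: Ic_def)

lemma reach_closed: "x \<in> reach \<Longrightarrow> (x, y) \<in> step\<^sup>* \<Longrightarrow> y \<in> reach"
  unfolding ver_reach_def by (meson ImageE ImageI rtrancl_trans)

lemma init_in_reach: "x \<in> ver_init Sig \<delta>H q0 n So Sc \<sigma> N k \<Longrightarrow> x \<in> reach"
  unfolding ver_reach_def by blast

text \<open>Case C5 of the verifier: component \<open>i\<close> has stopped moving for good.\<close>
definition frozen :: "nat \<Rightarrow> 'q \<Rightarrow> nat \<Rightarrow> bool" where
  "frozen i p d \<longleftrightarrow> k - d \<le> No i \<and> \<sigma> \<in> Gam_aug Sig \<delta>H (No i) p"

lemma frozen_Suc: "frozen i p d \<Longrightarrow> frozen i p (Suc d)"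
  by (auto simp: frozen_def)

lemma case13_iff: "case13 Sig \<delta>H So No \<sigma> k (q, qs, d) e i \<longleftrightarrow> \<not> frozen i (qs i) d \<and> e \<in> So i"
  by (auto simp: case13_def frozen_def)

lemma case24_iff:
  "case24 Sig \<delta>H So No \<sigma> k (q, qs, d) e i \<longleftrightarrow> \<not> frozen i (qs i) d \<and> e \<in> Sig \<and> e \<notin> So i"
  by (auto simp: case24_def frozen_def)

definition joint_move :: "(nat \<Rightarrow> 'q) \<Rightarrow> nat \<Rightarrow> 'e \<Rightarrow> nat \<Rightarrow> 'q" where
  "joint_move qs d e =
     (\<lambda>i. if i \<in> I \<and> \<not> frozen i (qs i) d \<and> e \<in> So i then the (\<delta>H (qs i) e) else qs i)"

lemma step_jointI:
  assumes "d < k" "\<delta>H q e = Some q'"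
    and "\<And>i. i \<in> I \<Longrightarrow> \<not> frozen i (qs i) d \<Longrightarrow> e \<in> So i \<Longrightarrow> \<delta>H (qs i) e \<noteq> None"
  shows "((q, qs, d), (q', joint_move qs d e, Suc d)) \<in> step"
  using assms events_in_Sig[OF assms(2)]
  unfolding ver_step_def case13_iff joint_move_def by (auto intro!: exI[of _ e])

lemma step_aloneI:
  "i \<in> I \<Longrightarrow> \<not> frozen i (qs i) d \<Longrightarrow> e \<notin> So i \<Longrightarrow> \<delta>H (qs i) e = Some p \<Longrightarrow>
   ((q, qs, d), (q, qs(i := p), d)) \<in> step"
  unfolding ver_step_def case24_iff using events_in_Sig by blast

lemma step_cases:
  assumes "((q, qs, d), y) \<in> step"
  obtains (joint) e q' where "d < k" "\<delta>H q e = Some q'"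
      "\<And>i. i \<in> I \<Longrightarrow> \<not> frozen i (qs i) d \<Longrightarrow> e \<in> So i \<Longrightarrow> \<delta>H (qs i) e \<noteq> None"
      "y = (q', joint_move qs d e, Suc d)"
  | (alone) i e p where "i \<in> I" "\<not> frozen i (qs i) d" "e \<notin> So i" "\<delta>H (qs i) e = Some p"
      "y = (q, qs(i := p), d)"
  using assms unfolding ver_step_def case13_iff case24_iff joint_move_def by auto

lemma step_alone_run:
  assumes "i \<in> I"
  shows "dstar \<delta>H (qs i) u = Some p \<Longrightarrow> set u \<inter> So i = {} \<Longrightarrow>
    \<exists>qs'. ((q, qs, d), (q, qs', d)) \<in> step\<^sup>* \<and> (\<forall>j. j \<noteq> i \<longrightarrow> qs' j = qs j) \<and>
      (qs' i = p \<or> frozen i (qs' i) d)"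
proof (induction u arbitrary: qs)
  case Nil
  then show ?case by (intro exI[of _ qs]) auto
next
  case (Cons e u)
  show ?case
  proof (cases "frozen i (qs i) d")
    case False
    from Cons.prems obtain p1 where p1: "\<delta>H (qs i) e = Some p1" "dstar \<delta>H p1 u = Some p"
      by (auto split: option.splits)
    have u: "set u \<inter> So i = {}"
      using Cons.prems(2) by auto
    from False Cons.prems assms p1 have step: "((q, qs, d), (q, qs(i := p1), d)) \<in> step"
      by (intro step_aloneI) auto
    have "dstar \<delta>H ((qs(i := p1)) i) u = Some p"
      using p1(2) by simp
    from Cons.IH[of "qs(i := p1)", OF this u] obtain qs' where
      "((q, qs(i := p1), d), (q, qs', d)) \<in> step\<^sup>*" "\<forall>j. j \<noteq> i \<longrightarrow> qs' j = (qs(i := p1)) j"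
      "qs' i = p \<or> frozen i (qs' i) d"
      by blast
    with step show ?thesis
      by (intro exI[of _ qs']) (auto intro: converse_rtrancl_into_rtrancl)
  qed (intro exI[of _ qs]; auto)
qed

subsection \<open>Soundness\<close>

text \<open>The delay \<open>m\<close> can only grow after component \<open>i\<close> has frozen, because from then on the
  first component moves on while component \<open>i\<close> stays put.\<close>
definition consistent :: "nat \<Rightarrow> 'e list \<Rightarrow> 'q \<Rightarrow> nat \<Rightarrow> bool" where
  "consistent i t p d \<longleftrightarrow> (\<exists>w m. dstar \<delta>H q0 w = Some p \<and> proj (So i) w = proj (So i) (trunc t m) \<and>
     (m = 0 \<or> frozen i p d \<and> m + k \<le> No i + d))"

definition realizable :: "'q vstate \<Rightarrow> bool" where
  "realizable x \<longleftrightarrow>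
     (case x of (q, qs, d) \<Rightarrow> \<exists>t. dstar \<delta>H q0 t = Some q \<and> (\<forall>i\<in>I. consistent i t (qs i) d))"

lemma consistentI:
  "dstar \<delta>H q0 w = Some p \<Longrightarrow> proj (So i) w = proj (So i) t \<Longrightarrow> consistent i t p d"
  unfolding consistent_def by (intro exI[of _ w] exI[of _ 0]) simp

lemma consistent_not_frozenD:
  "consistent i t p d \<Longrightarrow> \<not> frozen i p d \<Longrightarrow>
   \<exists>w. dstar \<delta>H q0 w = Some p \<and> proj (So i) w = proj (So i) t"
  unfolding consistent_def by force

lemma consistent_frozen_snoc:
  assumes "consistent i t p d" "frozen i p d"
  shows "consistent i (t @ [e]) p (Suc d)"
proof -
  from assms(1) obtain w m where w: "dstar \<delta>H q0 w = Some p" "proj (So i) w = proj (So i) (trunc t m)"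
    and "m = 0 \<or> m + k \<le> No i + d"
    unfolding consistent_def by blast
  moreover have "k \<le> No i + d"
    using assms(2) unfolding frozen_def by arith
  ultimately have "Suc m + k \<le> No i + Suc d"
    by auto
  with w assms(2) show ?thesis
    unfolding consistent_def by (intro exI[of _ w] exI[of _ "Suc m"]) (auto intro: frozen_Suc)
qed

lemma realizable_init:
  assumes "x \<in> ver_init Sig \<delta>H q0 n So Sc \<sigma> N k"
  shows "realizable x"
proof (cases "k < N")
  case True
  with assms show ?thesis
    unfolding ver_init_def realizable_def by (auto intro!: exI[of _ "[]"] consistentI[of "[]"])
next
  case False
  with assms obtain q qs t where "x = (q, qs, 0)" "dstar \<delta>H q0 t = Some q"
    "\<forall>i\<in>I. \<exists>w. dstar \<delta>H q0 w = Some (qs i) \<and> proj (So i) w = proj (So i) t"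
    unfolding ver_init_def by force
  then show ?thesis
    unfolding realizable_def by (blast intro: consistentI)
qed

lemma consistent_joint_move:
  assumes i: "i \<in> I" and "consistent i t (qs i) d"
    and enabled: "\<not> frozen i (qs i) d \<Longrightarrow> e \<in> So i \<Longrightarrow> \<delta>H (qs i) e \<noteq> None"
  shows "consistent i (t @ [e]) (joint_move qs d e i) (Suc d)"
proof (cases "frozen i (qs i) d")
  case True
  with assms(2) show ?thesis
    by (simp add: joint_move_def consistent_frozen_snoc)
next
  case False
  with assms(2) obtain w where w: "dstar \<delta>H q0 w = Some (qs i)" "proj (So i) w = proj (So i) t"
    using consistent_not_frozenD by blast
  show ?thesis
  proof (cases "e \<in> So i")
    case True
    with enabled False obtain p where "\<delta>H (qs i) e = Some p"
      by blast
    with True False i w show ?thesis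
      by (intro consistentI[of "w @ [e]"]) (simp_all add: joint_move_def dstar_snoc)
  next
    case False
    with w show ?thesis
      by (intro consistentI[of w]) (simp_all add: joint_move_def)
  qed
qed

lemma realizable_step:
  assumes "realizable x" "(x, y) \<in> step"
  shows "realizable y"
proof -
  obtain q qs d where x: "x = (q, qs, d)"
    by (cases x) blast
  from assms(1) obtain t where t: "dstar \<delta>H q0 t = Some q" "\<forall>i\<in>I. consistent i t (qs i) d"
    unfolding realizable_def x by auto
  from assms(2)[unfolded x] show ?thesis
  proof (cases rule: step_cases)
    case (joint e q')
    have "\<forall>i\<in>I. consistent i (t @ [e]) (joint_move qs d e i) (Suc d)"
      using consistent_joint_move joint(3) t(2) by blast
    moreover have "dstar \<delta>H q0 (t @ [e]) = Some q'"
      using t(1) joint(2) by (simp add: dstar_snoc)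
    ultimately show ?thesis
      unfolding joint(4) realizable_def prod.case by blast
  next
    case (alone i e p)
    with t(2) obtain w where w: "dstar \<delta>H q0 w = Some (qs i)" "proj (So i) w = proj (So i) t"
      using consistent_not_frozenD by blast
    with alone have "consistent i t p d"
      by (intro consistentI[of "w @ [e]"]) (simp_all add: dstar_snoc)
    with alone t show ?thesis
      unfolding realizable_def by (auto intro!: exI[of _ t])
  qed
qed

lemma realizable_reach: "x \<in> reach \<Longrightarrow> realizable x"
proof -
  assume "x \<in> reach"
  then obtain x0 where x0: "x0 \<in> ver_init Sig \<delta>H q0 n So Sc \<sigma> N k" and "(x0, x) \<in> step\<^sup>*"
    unfolding ver_reach_def by blast
  from this(2) show ?thesis
    by (induction rule: rtrancl_induct) (auto intro: realizable_init[OF x0] realizable_step)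
qed

lemma consistent_confusable:
  assumes "consistent i t p k" "\<sigma> \<in> Gam_aug Sig \<delta>H (No i) p"
  shows "\<exists>u. u @ [\<sigma>] \<in> lang \<delta>H q0 \<and> Theta (So i) (No i) u \<inter> Theta (So i) (No i) t \<noteq> {}"
proof -
  from assms(1) obtain w m where w: "dstar \<delta>H q0 w = Some p"
    "proj (So i) w = proj (So i) (trunc t m)" "m \<le> No i"
    unfolding consistent_def by auto
  from assms(2) obtain s p' where s: "length s \<le> No i" "dstar \<delta>H p s = Some p'" "\<sigma> \<in> Gam \<delta>H p'"
    unfolding Gam_aug_iff by blast
  have "dstar \<delta>H q0 (w @ s) = Some p'"
    using w(1) s(2) by (simp add: dstar_append)
  then have "(w @ s) @ [\<sigma>] \<in> lang \<delta>H q0"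
    using s(3) unfolding snoc_in_lang_iff by blast
  moreover have "proj (So i) w \<in> Theta (So i) (No i) (w @ s)"
    unfolding Theta_iff using s(1) by (intro exI[of _ "length s"]) simp
  moreover have "proj (So i) w \<in> Theta (So i) (No i) t"
    unfolding Theta_iff using w(2,3) by blast
  ultimately show ?thesis by blast
qed

lemma not_coobservable_if_bad_state_reachable:
  assumes sub: "\<forall>q e p. \<delta>H q e = Some p \<longrightarrow> \<delta> q e = Some p"
    and reach: "(q, qs, k) \<in> reach"
    and bad: "\<sigma> \<in> Gam \<delta> q - Gam \<delta>H q" "\<forall>i\<in>I. \<sigma> \<in> Gam_aug Sig \<delta>H (No i) (qs i)"
  shows "\<not> delay_coobservable (lang \<delta>H q0) (lang \<delta> q0) n So Sc No \<sigma>"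
proof -
  from realizable_reach[OF reach] obtain t where t: "dstar \<delta>H q0 t = Some q"
    "\<forall>i\<in>I. consistent i t (qs i) k"
    unfolding realizable_def by auto
  have "t \<in> lang \<delta>H q0"
    using t(1) by (simp add: lang_def)
  moreover have "t @ [\<sigma>] \<in> lang \<delta> q0 - lang \<delta>H q0"
    using t(1) dstar_sub[OF sub t(1)] bad(1) unfolding Diff_iff snoc_in_lang_iff by auto
  moreover have "\<exists>u \<in> lang \<delta> q0. u @ [\<sigma>] \<in> lang \<delta>H q0 \<and>
      Theta (So i) (No i) u \<inter> Theta (So i) (No i) t \<noteq> {}" if "i \<in> I" for i
  proof -
    from that t(2) bad(2) consistent_confusable obtain u where
      "u @ [\<sigma>] \<in> lang \<delta>H q0" "Theta (So i) (No i) u \<inter> Theta (So i) (No i) t \<noteq> {}"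
      by blast
    moreover from this(1) have "u \<in> lang \<delta> q0"
      using dstar_sub[OF sub] dstar_prefix_not_None by (fastforce simp: lang_def)
    ultimately show ?thesis by blast
  qed
  ultimately show ?thesis
    unfolding delay_coobservable_iff by blast
qed

subsection \<open>Completeness\<close>

context
  fixes S :: "'e list" and w :: "nat \<Rightarrow> 'e list" and m :: "nat \<Rightarrow> nat" and r :: "nat \<Rightarrow> 'q"
  assumes S_run: "dstar \<delta>H q0 S \<noteq> None"
    and w_run: "\<And>i. i \<in> I \<Longrightarrow> dstar \<delta>H q0 (w i) = Some (r i)"
    and r_aug: "\<And>i. i \<in> I \<Longrightarrow> \<sigma> \<in> Gam_aug Sig \<delta>H (No i) (r i)"
    and w_obs: "\<And>i. i \<in> I \<Longrightarrow> proj (So i) (w i) = proj (So i) (trunc S (m i))"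
    and m_le: "\<And>i. i \<in> I \<Longrightarrow> m i \<le> No i"
    and No_le: "\<And>i. i \<in> I \<Longrightarrow> No i \<le> N"
    and k_eq: "k = min (length S) N"
begin

lemma k_le_length: "k \<le> length S"
  using k_eq by simp

lemma prefix_run: "\<exists>q. dstar \<delta>H q0 (take j S) = Some q"
  using S_run dstar_prefix_not_None[of \<delta>H q0 "take j S" "drop j S"] by auto

text \<open>At depth \<open>d\<close> the first component has read \<open>take (pos d) S\<close>, which is \<open>S\<close> at depth \<open>k\<close>.\<close>
abbreviation pos :: "nat \<Rightarrow> nat" where
  "pos d \<equiv> length S - k + d"

definition tracking :: "nat \<Rightarrow> 'q \<Rightarrow> nat \<Rightarrow> bool" where
  "tracking i p d \<longleftrightarrow> pos d \<le> length S - m i \<and>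
     (\<exists>x y. w i = x @ y \<and> dstar \<delta>H q0 x = Some p \<and> proj (So i) x = proj (So i) (take (pos d) S))"

definition ready :: "nat \<Rightarrow> 'q \<Rightarrow> nat \<Rightarrow> bool" where
  "ready i p d \<longleftrightarrow> pos d < length S - m i \<and>
     (\<exists>x y. w i = x @ y \<and> dstar \<delta>H q0 x = Some p \<and> proj (So i) x = proj (So i) (take (pos d) S) \<and>
        (y = [] \<or> hd y \<in> So i))"

lemma ready_imp_tracking: "ready i p d \<Longrightarrow> tracking i p d"
  unfolding ready_def tracking_def by auto

text \<open>A component that has caught up with all of \<open>trunc S (m i)\<close> and cannot move on unobservably
  has used up \<open>w i\<close>.\<close>
lemma caught_up_frozen:
  assumes i: "i \<in> I" and x: "w i = x @ y" "dstar \<delta>H q0 x = Some p"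
    "proj (So i) x = proj (So i) (take (pos d) S)"
    and y: "y = [] \<or> hd y \<in> So i" and pos: "pos d = length S - m i"
  shows "frozen i p d"
proof -
  have "proj (So i) y = []"
    using w_obs[OF i] x(1,3) pos by (simp add: trunc_def)
  with y have "y = []"
    by (cases y) (auto simp: proj_Cons)
  with x(1,2) w_run[OF i] have "p = r i"
    by simp
  moreover have "k - d \<le> No i"
    using pos k_le_length m_le[OF i] by arith
  ultimately show ?thesis
    using r_aug[OF i] by (simp add: frozen_def)
qed

lemma steps_to_ready:
  assumes i: "i \<in> I" and "tracking i (qs i) d"
  shows "\<exists>qs'. ((q, qs, d), (q, qs', d)) \<in> step\<^sup>* \<and> (\<forall>j. j \<noteq> i \<longrightarrow> qs' j = qs j) \<and>
    (ready i (qs' i) d \<or> frozen i (qs' i) d)"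
proof -
  from assms(2) obtain x y where xy: "w i = x @ y" "dstar \<delta>H q0 x = Some (qs i)"
      "proj (So i) x = proj (So i) (take (pos d) S)" and pos: "pos d \<le> length S - m i"
    unfolding tracking_def by blast
  define u where "u = takeWhile (\<lambda>e. e \<notin> So i) y"
  define y' where "y' = dropWhile (\<lambda>e. e \<notin> So i) y"
  have y: "y = u @ y'"
    unfolding u_def y'_def by simp
  have u: "set u \<inter> So i = {}"
    unfolding u_def by (auto dest: set_takeWhileD)
  have y': "y' = [] \<or> hd y' \<in> So i"
    unfolding y'_def using hd_dropWhile[of "\<lambda>e. e \<notin> So i" y] by auto
  from w_run[OF i] xy(1,2) y obtain p where p: "dstar \<delta>H (qs i) u = Some p"
    by (auto simp: dstar_append_Some_iff)
  from step_alone_run[where qs = qs and q = q and d = d, OF i p u] obtain qs' where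
    qs': "((q, qs, d), (q, qs', d)) \<in> step\<^sup>*" "\<forall>j. j \<noteq> i \<longrightarrow> qs' j = qs j" "qs' i = p \<or> frozen i (qs' i) d"
    by blast
  have xu: "dstar \<delta>H q0 (x @ u) = Some p" "proj (So i) (x @ u) = proj (So i) (take (pos d) S)"
    using xy p u by (simp_all add: dstar_append proj_eq_Nil_iff)
  consider "frozen i (qs' i) d" | "qs' i = p" "pos d < length S - m i"
    | "qs' i = p" "pos d = length S - m i"
    using qs'(3) pos by linarith
  then show ?thesis
  proof cases
    case 1
    with qs' show ?thesis by blast
  next
    case 2
    with xy(1) y xu y' have "ready i (qs' i) d"
      unfolding ready_def by (metis append.assoc)
    with qs' show ?thesis by blast
  next
    case 3
    have "w i = (x @ u) @ y'"
      using xy(1) y by simp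
    from caught_up_frozen[OF i this xu y' 3(2)] 3(1) qs' show ?thesis
      by auto
  qed
qed

lemma steps_to_ready_on:
  assumes "finite J" "J \<subseteq> I" "\<forall>i\<in>I. tracking i (qs i) d \<or> frozen i (qs i) d"
  shows "\<exists>qs'. ((q, qs, d), (q, qs', d)) \<in> step\<^sup>* \<and>
    (\<forall>i\<in>I. tracking i (qs' i) d \<or> frozen i (qs' i) d) \<and> (\<forall>i\<in>J. ready i (qs' i) d \<or> frozen i (qs' i) d)"
  using assms
proof (induction J rule: finite_induct)
  case empty
  then show ?case by blast
next
  case (insert i J)
  then obtain qs1 where qs1: "((q, qs, d), (q, qs1, d)) \<in> step\<^sup>*"
    "\<forall>i\<in>I. tracking i (qs1 i) d \<or> frozen i (qs1 i) d" "\<forall>i\<in>J. ready i (qs1 i) d \<or> frozen i (qs1 i) d"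
    by blast
  have i: "i \<in> I"
    using insert.prems by blast
  show ?case
  proof (cases "frozen i (qs1 i) d")
    case True
    with qs1 show ?thesis by blast
  next
    case False
    with qs1(2) i have "tracking i (qs1 i) d"
      by blast
    from steps_to_ready[where qs = qs1 and q = q, OF i this] obtain qs2 where
      qs2: "((q, qs1, d), (q, qs2, d)) \<in> step\<^sup>*"
      "\<forall>j. j \<noteq> i \<longrightarrow> qs2 j = qs1 j" "ready i (qs2 i) d \<or> frozen i (qs2 i) d"
      by blast
    have "((q, qs, d), (q, qs2, d)) \<in> step\<^sup>*"
      using qs1(1) qs2(1) by (rule rtrancl_trans)
    moreover have "\<forall>j\<in>I. tracking j (qs2 j) d \<or> frozen j (qs2 j) d"
      using qs1(2) qs2(2,3) ready_imp_tracking by metis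
    moreover have "ready j (qs2 j) d \<or> frozen j (qs2 j) d" if "j \<in> insert i J" for j
    proof (cases "j = i")
      case False
      with that qs1(3) qs2(2) show ?thesis by auto
    qed (use qs2(3) in simp)
    ultimately show ?thesis by blast
  qed
qed

lemma steps_to_all_ready:
  "\<forall>i\<in>I. tracking i (qs i) d \<or> frozen i (qs i) d \<Longrightarrow>
   \<exists>qs'. ((q, qs, d), (q, qs', d)) \<in> step\<^sup>* \<and> (\<forall>i\<in>I. ready i (qs' i) d \<or> frozen i (qs' i) d)"
  using steps_to_ready_on[OF finite_I order_refl] by blast

lemma take_pos_Suc: "d < k \<Longrightarrow> take (pos (Suc d)) S = take (pos d) S @ [S ! pos d]"
proof -
  assume "d < k"
  then have "pos d < length S"
    using k_le_length by linarith
  then show ?thesis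
    by (simp add: take_Suc_conv_app_nth)
qed

lemma ready_next_event:
  assumes "ready i p d" "e = S ! pos d" "e \<in> So i" "i \<in> I"
  shows "\<exists>x y p'. w i = x @ e # y \<and> \<delta>H p e = Some p' \<and> dstar \<delta>H q0 (x @ [e]) = Some p' \<and>
    proj (So i) x = proj (So i) (take (pos d) S) \<and> pos d < length S - m i"
proof -
  from assms(1) obtain x y where xy: "w i = x @ y" "dstar \<delta>H q0 x = Some p"
      "proj (So i) x = proj (So i) (take (pos d) S)" "y = [] \<or> hd y \<in> So i"
    and lt: "pos d < length S - m i"
    unfolding ready_def by blast
  have "trunc S (m i) = take (pos d) S @ e # drop (Suc (pos d)) (trunc S (m i))"
    unfolding trunc_def assms(2) using lt by (intro take_eq_take_nth_drop) auto
  with w_obs[OF assms(4)] xy(1)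
  have "proj (So i) (x @ y) = proj (So i) (take (pos d) S @ e # drop (Suc (pos d)) (trunc S (m i)))"
    by metis
  from proj_next_observable[OF this xy(3) assms(3) xy(4)] obtain y' where y: "y = e # y'"
    by blast
  from w_run[OF assms(4)] xy(1,2) y obtain p' where "\<delta>H p e = Some p'"
    by (auto simp: dstar_append_Some_iff split: option.splits)
  moreover from this xy(2) have "dstar \<delta>H q0 (x @ [e]) = Some p'"
    by (simp add: dstar_snoc)
  ultimately show ?thesis
    using xy(1,3) y lt by blast
qed

lemma joint_move_tracking:
  assumes i: "i \<in> I" and d: "d < k" and e: "e = S ! pos d"
    and ready: "ready i (qs i) d \<or> frozen i (qs i) d"
  shows "tracking i (joint_move qs d e i) (Suc d) \<or> frozen i (joint_move qs d e i) (Suc d)"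
proof -
  have take_Suc: "take (pos (Suc d)) S = take (pos d) S @ [e]"
    using take_pos_Suc[OF d] e by simp
  consider "frozen i (qs i) d" | "\<not> frozen i (qs i) d" "e \<in> So i" | "\<not> frozen i (qs i) d" "e \<notin> So i"
    by blast
  then show ?thesis
  proof cases
    case 1
    then show ?thesis by (simp add: joint_move_def frozen_Suc)
  next
    case 2
    with ready have "ready i (qs i) d"
      by blast
    from ready_next_event[OF this e 2(2) i] obtain x y p' where xy: "w i = (x @ [e]) @ y"
      "\<delta>H (qs i) e = Some p'" "dstar \<delta>H q0 (x @ [e]) = Some p'"
      "proj (So i) (x @ [e]) = proj (So i) (take (pos (Suc d)) S)" "pos (Suc d) \<le> length S - m i"
      using take_Suc 2(2) by fastforce
    then have "tracking i p' (Suc d)"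
      unfolding tracking_def by blast
    with 2 i xy(2) show ?thesis
      by (simp add: joint_move_def)
  next
    case 3
    with ready have "ready i (qs i) d"
      by blast
    with 3 i take_Suc show ?thesis
      unfolding ready_def tracking_def joint_move_def by auto
  qed
qed

lemma joint_step_tracking:
  assumes d: "d < k" and q: "dstar \<delta>H q0 (take (pos d) S) = Some q"
    and ready: "\<forall>i\<in>I. ready i (qs i) d \<or> frozen i (qs i) d"
  shows "\<exists>q' qs'. ((q, qs, d), (q', qs', Suc d)) \<in> step \<and>
    dstar \<delta>H q0 (take (pos (Suc d)) S) = Some q' \<and>
    (\<forall>i\<in>I. tracking i (qs' i) (Suc d) \<or> frozen i (qs' i) (Suc d))"
proof -
  define e where "e = S ! pos d"
  obtain q' where q': "dstar \<delta>H q0 (take (pos (Suc d)) S) = Some q'"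
    using prefix_run by blast
  with q take_pos_Suc[OF d] have "\<delta>H q e = Some q'"
    by (simp add: dstar_snoc e_def)
  moreover have "\<delta>H (qs i) e \<noteq> None" if "i \<in> I" "\<not> frozen i (qs i) d" "e \<in> So i" for i
    using ready_next_event[OF _ e_def \<open>e \<in> So i\<close> \<open>i \<in> I\<close>] ready that by blast
  ultimately have "((q, qs, d), (q', joint_move qs d e, Suc d)) \<in> step"
    using d by (intro step_jointI)
  with q' joint_move_tracking[OF _ d e_def] ready show ?thesis
    by blast
qed

lemma tracking_start:
  assumes i: "i \<in> I" and "k = N"
  shows "\<exists>p. tracking i p 0"
proof -
  have le: "pos 0 \<le> length S - m i"
    using assms k_le_length m_le[OF i] No_le[OF i] by linarith
  then have "trunc S (m i) = take (pos 0) S @ drop (pos 0) (trunc S (m i))"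
    using append_take_drop_id[of "pos 0" "trunc S (m i)"] by (simp add: trunc_def min_def)
  with w_obs[OF i] have
    "proj (So i) (w i) = proj (So i) (take (pos 0) S) @ proj (So i) (drop (pos 0) (trunc S (m i)))"
    by (metis proj_append)
  from proj_eq_append_split[OF this] obtain x y where
    xy: "w i = x @ y" "proj (So i) x = proj (So i) (take (pos 0) S)"
    by blast
  moreover from xy(1) w_run[OF i] obtain p where "dstar \<delta>H q0 x = Some p"
    by (auto simp: dstar_append_Some_iff)
  ultimately show ?thesis
    using le unfolding tracking_def by blast
qed

lemma init_tracking:
  "\<exists>q qs. (q, qs, 0) \<in> ver_init Sig \<delta>H q0 n So Sc \<sigma> N k \<and>
     dstar \<delta>H q0 (take (pos 0) S) = Some q \<and> (\<forall>i\<in>I. tracking i (qs i) 0)"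
proof (cases "k < N")
  case True
  then have "pos 0 = 0"
    using k_eq by simp
  have "tracking i q0 0" for i
  proof -
    have "w i = [] @ w i" "dstar \<delta>H q0 [] = Some q0" "proj (So i) [] = proj (So i) (take (pos 0) S)"
      "pos 0 \<le> length S - m i"
      using \<open>pos 0 = 0\<close> by simp_all
    then show ?thesis
      unfolding tracking_def by blast
  qed
  with True \<open>pos 0 = 0\<close> show ?thesis
    by (intro exI[of _ q0] exI[of _ "\<lambda>_. q0"]) (simp add: ver_init_def)
next
  case False
  with k_eq have "\<forall>i\<in>I. \<exists>p. tracking i p 0"
    using tracking_start by simp
  then obtain qs0 where qs0: "\<forall>i\<in>I. tracking i (qs0 i) 0"
    by (rule bchoice[THEN exE])
  define qs where "qs i = (if i \<in> I then qs0 i else q0)" for i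
  have tracking: "\<forall>i\<in>I. tracking i (qs i) 0"
    using qs0 by (simp add: qs_def)
  obtain q where q: "dstar \<delta>H q0 (take (pos 0) S) = Some q"
    using prefix_run by blast
  have "\<forall>i\<in>I. \<exists>si\<in>lang \<delta>H q0. dstar \<delta>H q0 si = Some (qs i) \<and>
      proj (So i) si = proj (So i) (take (pos 0) S)"
    using tracking by (fastforce simp: tracking_def lang_def)
  moreover have "take (pos 0) S \<in> lang \<delta>H q0"
    using q by (simp add: lang_def)
  moreover have "\<forall>i. i \<notin> I \<longrightarrow> qs i = q0"
    by (simp add: qs_def)
  ultimately have "(q, qs, 0) \<in> ver_init Sig \<delta>H q0 n So Sc \<sigma> N k"
    unfolding ver_init_def if_not_P[OF False] using q by blast
  with q tracking show ?thesis
    by blast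
qed

lemma reach_tracking:
  "d \<le> k \<Longrightarrow> \<exists>q qs. (q, qs, d) \<in> reach \<and> dstar \<delta>H q0 (take (pos d) S) = Some q \<and>
     (\<forall>i\<in>I. tracking i (qs i) d \<or> frozen i (qs i) d)"
proof (induction d)
  case 0
  from init_tracking show ?case
    by (blast intro: init_in_reach)
next
  case (Suc d)
  then obtain q qs where h: "(q, qs, d) \<in> reach" "dstar \<delta>H q0 (take (pos d) S) = Some q"
    "\<forall>i\<in>I. tracking i (qs i) d \<or> frozen i (qs i) d"
    by auto
  from steps_to_all_ready[OF h(3)] obtain qs1 where
    qs1: "((q, qs, d), (q, qs1, d)) \<in> step\<^sup>*" "\<forall>i\<in>I. ready i (qs1 i) d \<or> frozen i (qs1 i) d"
    by auto
  from joint_step_tracking[OF _ h(2) qs1(2)] Suc.prems obtain q' qs' where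
    adv: "((q, qs1, d), (q', qs', Suc d)) \<in> step" "dstar \<delta>H q0 (take (pos (Suc d)) S) = Some q'"
      "\<forall>i\<in>I. tracking i (qs' i) (Suc d) \<or> frozen i (qs' i) (Suc d)"
    by auto
  from h(1) qs1(1) adv(1) have "(q', qs', Suc d) \<in> reach"
    by (meson reach_closed rtrancl.rtrancl_into_rtrancl)
  with adv(2,3) show ?case
    by blast
qed

lemma reach_all_frozen:
  assumes "dstar \<delta>H q0 S = Some q"
  shows "\<exists>qs. (q, qs, k) \<in> reach \<and> (\<forall>i\<in>I. \<sigma> \<in> Gam_aug Sig \<delta>H (No i) (qs i))"
proof -
  from reach_tracking[OF order_refl] obtain q' qs where h: "(q', qs, k) \<in> reach"
    "dstar \<delta>H q0 (take (pos k) S) = Some q'" "\<forall>i\<in>I. tracking i (qs i) k \<or> frozen i (qs i) k"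
    by blast
  have "q' = q"
    using h(2) assms k_le_length by simp
  from steps_to_all_ready[OF h(3)] obtain qs' where
    qs': "((q', qs, k), (q', qs', k)) \<in> step\<^sup>*" "\<forall>i\<in>I. ready i (qs' i) k \<or> frozen i (qs' i) k"
    by blast
  have "\<not> ready i p k" for i p
    unfolding ready_def using k_le_length by auto
  with qs'(2) have "\<forall>i\<in>I. \<sigma> \<in> Gam_aug Sig \<delta>H (No i) (qs' i)"
    unfolding frozen_def by blast
  moreover have "(q, qs', k) \<in> reach"
    using reach_closed[OF h(1) qs'(1)] \<open>q' = q\<close> by simp
  ultimately show ?thesis
    by blast
qed

end

lemma reach_all_frozen_if_confusable:
  assumes S: "dstar \<delta>H q0 S = Some q" and k: "k = min (length S) N"
    and No_le: "\<And>i. i \<in> I \<Longrightarrow> No i \<le> N"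
    and confusable: "\<And>i. i \<in> I \<Longrightarrow>
      \<exists>u. u @ [\<sigma>] \<in> lang \<delta>H q0 \<and> Theta (So i) (No i) u \<inter> Theta (So i) (No i) S \<noteq> {}"
  shows "\<exists>qs. (q, qs, k) \<in> reach \<and> (\<forall>i\<in>I. \<sigma> \<in> Gam_aug Sig \<delta>H (No i) (qs i))"
proof -
  have "\<exists>wi mi ri. dstar \<delta>H q0 wi = Some ri \<and> \<sigma> \<in> Gam_aug Sig \<delta>H (No i) ri \<and>
      proj (So i) wi = proj (So i) (trunc S mi) \<and> mi \<le> No i" if i: "i \<in> I" for i
  proof -
    from confusable[OF i] obtain u t where "u @ [\<sigma>] \<in> lang \<delta>H q0"
      "t \<in> Theta (So i) (No i) u" "t \<in> Theta (So i) (No i) S"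
      by blast
    then obtain mu mS where u: "u @ [\<sigma>] \<in> lang \<delta>H q0" "mu \<le> No i" "mS \<le> No i"
      "proj (So i) (trunc u mu) = proj (So i) (trunc S mS)"
      unfolding Theta_iff by metis
    from u(1) obtain p where p: "dstar \<delta>H q0 u = Some p" "\<sigma> \<in> Gam \<delta>H p"
      unfolding snoc_in_lang_iff by blast
    define s where "s = drop (length u - mu) u"
    have "u = trunc u mu @ s"
      by (simp add: trunc_def s_def)
    with p(1) obtain ri where ri: "dstar \<delta>H q0 (trunc u mu) = Some ri" "dstar \<delta>H ri s = Some p"
      by (metis dstar_append_Some_iff)
    have "length s \<le> No i"
      using u(2) by (simp add: s_def)
    with ri(2) p(2) have "\<sigma> \<in> Gam_aug Sig \<delta>H (No i) ri"
      unfolding Gam_aug_iff using run_in_lists[OF ri(2)] by blast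
    with ri(1) u(3,4) show ?thesis
      by blast
  qed
  then obtain w m r where wmr: "\<And>i. i \<in> I \<Longrightarrow> dstar \<delta>H q0 (w i) = Some (r i) \<and>
      \<sigma> \<in> Gam_aug Sig \<delta>H (No i) (r i) \<and> proj (So i) (w i) = proj (So i) (trunc S (m i)) \<and> m i \<le> No i"
    by metis
  have "dstar \<delta>H q0 S \<noteq> None"
    using S by simp
  from reach_all_frozen[where w = w and m = m and r = r, OF this] wmr No_le k S show ?thesis
    by blast
qed

end

lemma no_bad_state_if_coobservable:
  assumes V: "verifier Sig \<delta>H"
    and sub: "\<forall>q e p. \<delta>H q e = Some p \<longrightarrow> \<delta> q e = Some p"
    and coobs: "delay_coobservable (lang \<delta>H q0) (lang \<delta> q0) n So Sc No \<sigma>"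
  shows "(\<forall>k \<in> {0..N}. \<not> (\<exists>q qs. (q, qs, k) \<in> ver_reach Sig \<delta>H q0 n So Sc No \<sigma> N k \<and>
      \<sigma> \<in> Gam \<delta> q - Gam \<delta>H q \<and> (\<forall>i \<in> Ic n Sc \<sigma>. \<sigma> \<in> Gam_aug Sig \<delta>H (No i) (qs i))))"
proof (intro ballI notI)
  fix k
  assume "\<exists>q qs. (q, qs, k) \<in> ver_reach Sig \<delta>H q0 n So Sc No \<sigma> N k \<and>
    \<sigma> \<in> Gam \<delta> q - Gam \<delta>H q \<and> (\<forall>i \<in> Ic n Sc \<sigma>. \<sigma> \<in> Gam_aug Sig \<delta>H (No i) (qs i))"
  then obtain q qs where "(q, qs, k) \<in> ver_reach Sig \<delta>H q0 n So Sc No \<sigma> N k"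
    "\<sigma> \<in> Gam \<delta> q - Gam \<delta>H q" "\<forall>i \<in> Ic n Sc \<sigma>. \<sigma> \<in> Gam_aug Sig \<delta>H (No i) (qs i)"
    by blast
  from verifier.not_coobservable_if_bad_state_reachable[OF V sub this] coobs show False
    by blast
qed

lemma coobservable_if_no_bad_state:
  assumes V: "verifier Sig \<delta>H"
    and sub: "\<forall>q e p. \<delta>H q e = Some p \<longrightarrow> \<delta> q e = Some p"
    and No_le: "\<forall>i \<in> Ic n Sc \<sigma>. No i \<le> N"
    and no_bad: "(\<forall>k \<in> {0..N}. \<not> (\<exists>q qs. (q, qs, k) \<in> ver_reach Sig \<delta>H q0 n So Sc No \<sigma> N k \<and>
      \<sigma> \<in> Gam \<delta> q - Gam \<delta>H q \<and> (\<forall>i \<in> Ic n Sc \<sigma>. \<sigma> \<in> Gam_aug Sig \<delta>H (No i) (qs i))))"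
  shows "delay_coobservable (lang \<delta>H q0) (lang \<delta> q0) n So Sc No \<sigma>"
proof (rule ccontr)
  assume "\<not> delay_coobservable (lang \<delta>H q0) (lang \<delta> q0) n So Sc No \<sigma>"
  then obtain S where S: "S \<in> lang \<delta>H q0" "S @ [\<sigma>] \<in> lang \<delta> q0 - lang \<delta>H q0"
    and confusable: "\<forall>i \<in> Ic n Sc \<sigma>. \<exists>u \<in> lang \<delta> q0. u @ [\<sigma>] \<in> lang \<delta>H q0 \<and>
      Theta (So i) (No i) u \<inter> Theta (So i) (No i) S \<noteq> {}"
    unfolding delay_coobservable_iff by blast
  from S(1) obtain q where q: "dstar \<delta>H q0 S = Some q"
    by (auto simp: lang_def)
  have bad: "\<sigma> \<in> Gam \<delta> q - Gam \<delta>H q"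
    using S(2) q dstar_sub[OF sub q] unfolding Diff_iff snoc_in_lang_iff by auto
  have "\<exists>u. u @ [\<sigma>] \<in> lang \<delta>H q0 \<and> Theta (So i) (No i) u \<inter> Theta (So i) (No i) S \<noteq> {}"
    if "i \<in> Ic n Sc \<sigma>" for i
    using confusable that by blast
  from verifier.reach_all_frozen_if_confusable[where n = n and So = So and Sc = Sc and No = No
      and \<sigma> = \<sigma> and N = N and k = "min (length S) N", OF V q refl No_le[rule_format] this]
  obtain qs where qs:
    "(q, qs, min (length S) N) \<in> ver_reach Sig \<delta>H q0 n So Sc No \<sigma> N (min (length S) N)"
    "\<forall>i \<in> Ic n Sc \<sigma>. \<sigma> \<in> Gam_aug Sig \<delta>H (No i) (qs i)"
    by blast
  then have "\<exists>q qs. (q, qs, min (length S) N) \<in> ver_reach Sig \<delta>H q0 n So Sc No \<sigma> N (min (length S) N) \<and>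
      \<sigma> \<in> Gam \<delta> q - Gam \<delta>H q \<and> (\<forall>i \<in> Ic n Sc \<sigma>. \<sigma> \<in> Gam_aug Sig \<delta>H (No i) (qs i))"
    using bad by blast
  moreover have "min (length S) N \<in> {0..N}"
    by simp
  ultimately show False
    using no_bad by (meson bspec)
qed

theorem theorem2:
  fixes Sig :: "'e set" and Q QH :: "'q set" and \<delta> \<delta>H :: "'q \<Rightarrow> 'e \<Rightarrow> 'q option" and q0 :: 'q
    and n :: nat and So Sc :: "nat \<Rightarrow> 'e set" and No :: "nat \<Rightarrow> nat" and \<sigma> :: 'e
  assumes G: "is_DFA Sig Q \<delta> q0"
    and H: "is_subaut Sig Q \<delta> QH \<delta>H q0"
    and So: "\<forall>i \<in> {1..n}. So i \<subseteq> Sig"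
    and Sc: "\<forall>i \<in> {1..n}. Sc i \<subseteq> Sig"
    and sig: "\<sigma> \<in> (\<Union>i \<in> {1..n}. Sc i)"
  defines "N \<equiv> Max (No ` Ic n Sc \<sigma>)"
  shows "delay_coobservable (lang \<delta>H q0) (lang \<delta> q0) n So Sc No \<sigma> \<longleftrightarrow>
    (\<forall>k \<in> {0..N}. \<not> (\<exists>q qs. (q, qs, k) \<in> ver_reach Sig \<delta>H q0 n So Sc No \<sigma> N k \<and>
        \<sigma> \<in> Gam \<delta> q - Gam \<delta>H q \<and>
        (\<forall>i \<in> Ic n Sc \<sigma>. \<sigma> \<in> Gam_aug Sig \<delta>H (No i) (qs i))))"
proof -
  have V: "verifier Sig \<delta>H"
    using H unfolding verifier_def is_subaut_def is_DFA_def by blast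
  have sub: "\<forall>q e p. \<delta>H q e = Some p \<longrightarrow> \<delta> q e = Some p"
    using H unfolding is_subaut_def by blast
  have "finite (Ic n Sc \<sigma>)"
    by (simp add: Ic_def)
  then have No_le: "\<forall>i \<in> Ic n Sc \<sigma>. No i \<le> N"
    unfolding N_def by simp
  show ?thesis
    using no_bad_state_if_coobservable[OF V sub] coobservable_if_no_bad_state[OF V sub No_le]
    by (rule iffI)
qed

end
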